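(* Let $\ell$ be a field of characteristic $p>0$ with $[\ell:\ell^p]=p^c$ and $H^{c+1}_p(\ell)\ne0$. Let $\alpha\in\Omega^q_\ell$ be such that for all $a\in\ell$ and all $b_1,\dots,b_{c-q}\in\ell^\times$, $\delta_1(a\,\alpha\wedge d\log b_1\wedge\dots\wedge d\log b_{c-q})=0$ in $H^{c+1}_p(\ell)$. Then $\alpha=0$.
   Context: $H^{c+1}_p(\ell)=H^1(\ell_{\text{ét}},\Omega^c_{\log})$, and $\delta_1:\Omega^c_\ell\to H^{c+1}_p(\ell)$ is the (surjective) coboundary map of the exact sequence of étale sheaves $0\to\Omega^c_{\log}\to\Omega^c\xrightarrow{C^{-1}-1}\Omega^c/d\Omega^{c-1}\to0$, where $C^{-1}$ is the inverse Cartier operator; $d\log b=db/b$. *)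

theory Defs
  imports Main "HOL-Computational_Algebra.Primes"
begin

(* A "term" (a, [b1,...,bq]) stands for the differential form  a db1 /\ ... /\ dbq.
   A formal sum is a finitely supported Z-valued function on terms. *)
type_synonym 'a fterm = "'a \<times> 'a list"
type_synonym 'a fsum = "'a fterm \<Rightarrow> int"

definition fs_zero :: "'a fsum" where "fs_zero = (\<lambda>_. 0)"
definition fs_gen :: "'a fterm \<Rightarrow> 'a fsum" where "fs_gen t = (\<lambda>s. if s = t then 1 else 0)"
definition fs_add :: "'a fsum \<Rightarrow> 'a fsum \<Rightarrow> 'a fsum" where "fs_add f g = (\<lambda>s. f s + g s)"
definition fs_neg :: "'a fsum \<Rightarrow> 'a fsum" where "fs_neg f = (\<lambda>s. - f s)"
definition fs_diff :: "'a fsum \<Rightarrow> 'a fsum \<Rightarrow> 'a fsum" where "fs_diff f g = (\<lambda>s. f s - g s)"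

definition fs_lin :: "('a fterm \<Rightarrow> 'b fsum) \<Rightarrow> 'a fsum \<Rightarrow> 'b fsum" where
  "fs_lin \<phi> f = (\<lambda>s. \<Sum>t\<in>{t. f t \<noteq> 0}. f t * \<phi> t s)"

inductive_set zspan :: "'a fsum set \<Rightarrow> 'a fsum set" for S where
  zspan_base: "f \<in> S \<Longrightarrow> f \<in> zspan S"
| zspan_zero: "fs_zero \<in> zspan S"
| zspan_add: "f \<in> zspan S \<Longrightarrow> g \<in> zspan S \<Longrightarrow> fs_add f g \<in> zspan S"
| zspan_neg: "f \<in> zspan S \<Longrightarrow> fs_neg f \<in> zspan S"

definition Form :: "nat \<Rightarrow> ('a::field) fsum set" where
  "Form q = {f. finite {t. f t \<noteq> 0} \<and> (\<forall>t. f t \<noteq> 0 \<longrightarrow> length (snd t) = q)}"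

(* defining relations of Omega^q = Lambda^q_l (Omega^1_{l/Z}) as an abelian group on the
   generators a db1/\.../\dbq : additivity in a, additivity and Leibniz rule in each slot,
   alternation and antisymmetry *)
definition Rel :: "nat \<Rightarrow> ('a::field) fsum set" where
  "Rel q =
     {fs_diff (fs_diff (fs_gen (a + a', bs)) (fs_gen (a, bs))) (fs_gen (a', bs))
        | a a' bs. length bs = q}
   \<union> {fs_diff (fs_diff (fs_gen (a, bs[i := b + b'])) (fs_gen (a, bs[i := b]))) (fs_gen (a, bs[i := b']))
        | a b b' bs i. length bs = q \<and> i < q}
   \<union> {fs_diff (fs_diff (fs_gen (a, bs[i := b * b'])) (fs_gen (a * b, bs[i := b']))) (fs_gen (a * b', bs[i := b]))
        | a b b' bs i. length bs = q \<and> i < q}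
   \<union> {fs_gen (a, bs) | a bs i j. length bs = q \<and> i < j \<and> j < q \<and> bs ! i = bs ! j}
   \<union> {fs_add (fs_gen (a, bs)) (fs_gen (a, bs[i := bs ! j, j := bs ! i]))
        | a bs i j. length bs = q \<and> i < j \<and> j < q}"

definition form_eq :: "nat \<Rightarrow> ('a::field) fsum \<Rightarrow> 'a fsum \<Rightarrow> bool" where
  "form_eq q f g \<longleftrightarrow> fs_diff f g \<in> zspan (Rel q)"

definition dform :: "('a::field) fsum \<Rightarrow> 'a fsum" where
  "dform = fs_lin (\<lambda>(a, bs). fs_gen (1, a # bs))"

definition cartier_inv :: "nat \<Rightarrow> ('a::field) fsum \<Rightarrow> 'a fsum" where
  "cartier_inv p = fs_lin (\<lambda>(a, bs). fs_gen (a ^ p * prod_list (map (\<lambda>b. b ^ (p - 1)) bs), bs))"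

(* delta_1(omega) = 0 in H^{c+1}_p(l) = coker(C^{-1}-1 : Omega^c -> Omega^c / d Omega^{c-1}) *)
definition H_zero :: "nat \<Rightarrow> nat \<Rightarrow> ('a::field) fsum \<Rightarrow> bool" where
  "H_zero p c \<omega> \<longleftrightarrow>
     (\<exists>\<eta>\<in>Form c. \<exists>\<beta>\<in>Form (c - 1). (c = 0 \<longrightarrow> \<beta> = fs_zero) \<and>
        form_eq c \<omega> (fs_add (fs_diff (cartier_inv p \<eta>) \<eta>) (dform \<beta>)))"

definition H_nonzero :: "nat \<Rightarrow> nat \<Rightarrow> 'a::field itself \<Rightarrow> bool" where
  "H_nonzero p c _ \<longleftrightarrow> (\<exists>\<omega>\<in>(Form c :: 'a fsum set). \<not> H_zero p c \<omega>)"

definition wedge_dlog :: "('a::field) \<Rightarrow> 'a fsum \<Rightarrow> 'a list \<Rightarrow> 'a fsum" where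
  "wedge_dlog a \<alpha> bs = fs_lin (\<lambda>(x, cs). fs_gen (a * x / prod_list bs, cs @ bs)) \<alpha>"

(* [l : l^p] = p^c : l has a basis of p^c elements as a vector space over l^p *)
definition frob_degree :: "nat \<Rightarrow> nat \<Rightarrow> 'a::field itself \<Rightarrow> bool" where
  "frob_degree p c _ \<longleftrightarrow>
     (\<exists>e :: 'a list. length e = p ^ c \<and>
        (\<forall>x :: 'a. \<exists>!y :: 'a list. length y = p ^ c \<and> x = (\<Sum>i<p ^ c. (y ! i) ^ p * e ! i)))"

end

theory Submission
  imports Defs "HOL-Library.Function_Algebras" "HOL-Computational_Algebra.Polynomial_Factorial"
begin

(* Since [l : l^p] = p^c, a dimension count for l as a vector space over l^p gives at most c
   elements t_1, ..., t_k that generate l as a ring over l^p.  Because d(y^p) = 0, additivity and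
   the Leibniz rule then write every q-form as a combination of the forms
   dt_I = dt_{i_1} /\ ... /\ dt_{i_q}, I a q-subset of {1..k}.  As H^{c+1}_p(l) is nonzero, so is
   Omega^c, hence k = c and delta_1 does not vanish on some multiple of dt_1 /\ ... /\ dt_c.
   Write alpha = sum_I f_I dt_I and suppose some f_I is nonzero.  Wedging a alpha with the dlog t_j
   for j outside I kills every other term and leaves +-(a f_I / prod_j t_j) dt_1 /\ ... /\ dt_c; as
   a ranges over l this reaches every top form, so delta_1 would vanish on all of them.  Hence all
   f_I vanish and alpha = 0. *)

section \<open>Formal sums\<close>

lemma fs_zero_eq_zero: "fs_zero = 0"
  by (simp add: fs_zero_def zero_fun_def)

lemma fs_add_eq_plus: "fs_add f g = f + g"
  by (simp add: fs_add_def plus_fun_def)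

lemma fs_neg_eq_uminus: "fs_neg f = - f"
  by (simp add: fs_neg_def fun_Compl_def)

lemma fs_diff_eq_minus: "fs_diff f g = f - g"
  by (simp add: fs_diff_def fun_diff_def)

lemma sum_fun_apply: "(sum f A) x = (\<Sum>a\<in>A. f a x)"
  by (induction A rule: infinite_finite_induct) (auto simp: zero_fun_def plus_fun_def)

lemma zspan_0: "0 \<in> zspan S"
  using zspan_zero[of S] by (simp add: fs_zero_eq_zero)

lemma zspan_plus: "f \<in> zspan S \<Longrightarrow> g \<in> zspan S \<Longrightarrow> f + g \<in> zspan S"
  using zspan_add[of f S g] by (simp add: fs_add_eq_plus)

lemma zspan_uminus: "f \<in> zspan S \<Longrightarrow> - f \<in> zspan S"
  using zspan_neg[of f S] by (simp add: fs_neg_eq_uminus)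

lemma zspan_minus: "f \<in> zspan S \<Longrightarrow> g \<in> zspan S \<Longrightarrow> f - g \<in> zspan S"
  using zspan_plus[of f S "- g"] zspan_uminus[of g S] by simp

lemma zspan_sum: "(\<And>i. i \<in> A \<Longrightarrow> f i \<in> zspan S) \<Longrightarrow> sum f A \<in> zspan S"
  by (induction A rule: infinite_finite_induct) (auto intro: zspan_plus zspan_0)

lemma zspan_subset:
  assumes "S \<subseteq> zspan T" "f \<in> zspan S"
  shows "f \<in> zspan T"
  using assms(2) by (induction f rule: zspan.induct) (use assms(1) in \<open>auto intro: zspan.intros\<close>)

definition zscale :: "int \<Rightarrow> 'a fsum \<Rightarrow> 'a fsum" where
  "zscale n f = (\<lambda>s. n * f s)"

lemma zspan_zscale:
  assumes "f \<in> zspan S"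
  shows "zscale n f \<in> zspan S"
proof -
  have nat: "zscale (int k) f \<in> zspan S" for k
  proof (induction k)
    case 0
    then show ?case using zspan_0 by (simp add: zscale_def zero_fun_def)
  next
    case (Suc k)
    have "zscale (int (Suc k)) f = zscale (int k) f + f"
      by (simp add: zscale_def plus_fun_def algebra_simps)
    then show ?case using Suc zspan_plus assms by metis
  qed
  show ?thesis
  proof (cases "n \<ge> 0")
    case True
    then show ?thesis using nat[of "nat n"] by simp
  next
    case False
    then have "zscale n f = - zscale (int (nat (- n))) f"
      by (simp add: zscale_def fun_Compl_def)
    then show ?thesis using nat zspan_uminus by metis
  qed
qed

definition finite_support :: "'a fsum \<Rightarrow> bool" where
  "finite_support f \<longleftrightarrow> finite {t. f t \<noteq> 0}"

lemma finite_support_gen: "finite_support (fs_gen t)"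
  unfolding finite_support_def fs_gen_def by simp

lemma finite_support_0: "finite_support 0"
  unfolding finite_support_def by (simp add: zero_fun_def)

lemma finite_support_plus:
  "finite_support f \<Longrightarrow> finite_support g \<Longrightarrow> finite_support (f + g)"
  unfolding finite_support_def
  by (rule finite_subset[of _ "{t. f t \<noteq> 0} \<union> {t. g t \<noteq> 0}"]) (auto simp: plus_fun_def)

lemma finite_support_uminus: "finite_support f \<Longrightarrow> finite_support (- f)"
  unfolding finite_support_def by (simp add: fun_Compl_def)

lemma finite_support_minus:
  "finite_support f \<Longrightarrow> finite_support g \<Longrightarrow> finite_support (f - g)"
  using finite_support_plus[of f "- g"] finite_support_uminus[of g] by simp

lemma finite_support_sum:
  "(\<And>i. i \<in> A \<Longrightarrow> finite_support (f i)) \<Longrightarrow> finite_support (sum f A)"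
  by (induction A rule: infinite_finite_induct) (auto intro: finite_support_0 finite_support_plus)

lemma finite_support_zspan:
  assumes "\<And>r. r \<in> S \<Longrightarrow> finite_support r" "f \<in> zspan S"
  shows "finite_support f"
  using assms(2)
proof (induction f rule: zspan.induct)
  case zspan_zero
  then show ?case by (simp only: fs_zero_eq_zero finite_support_0)
next
  case (zspan_add f g)
  then show ?case by (simp only: fs_add_eq_plus finite_support_plus)
next
  case (zspan_neg f)
  then show ?case by (simp only: fs_neg_eq_uminus finite_support_uminus)
qed (rule assms(1))

lemma Form_finite_support: "\<omega> \<in> Form q \<Longrightarrow> finite_support \<omega>"
  unfolding Form_def finite_support_def by simp

lemma finite_support_decomp:
  assumes "finite_support f"
  shows "f = (\<Sum>t\<in>{t. f t \<noteq> 0}. zscale (f t) (fs_gen t))"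
proof
  fix x
  have "(\<Sum>t\<in>{t. f t \<noteq> 0}. zscale (f t) (fs_gen t)) x = (\<Sum>t\<in>{t. f t \<noteq> 0}. if t = x then f t else 0)"
    by (simp add: sum_fun_apply zscale_def fs_gen_def) (rule sum.cong, auto)
  also have "\<dots> = f x"
    using assms unfolding finite_support_def by (simp add: sum.delta')
  finally show "f x = (\<Sum>t\<in>{t. f t \<noteq> 0}. zscale (f t) (fs_gen t)) x" by simp
qed

lemma zspan_if_support_in_zspan:
  "finite_support f \<Longrightarrow> (\<And>t. f t \<noteq> 0 \<Longrightarrow> fs_gen t \<in> zspan S) \<Longrightarrow> f \<in> zspan S"
  by (subst finite_support_decomp) (auto intro!: zspan_sum zspan_zscale)

lemma fs_lin_eq_sum_over:
  "finite A \<Longrightarrow> {t. f t \<noteq> 0} \<subseteq> A \<Longrightarrow> fs_lin \<phi> f = (\<lambda>s. \<Sum>t\<in>A. f t * \<phi> t s)"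
  unfolding fs_lin_def by (intro ext sum.mono_neutral_left) auto

lemma fs_lin_gen [simp]: "fs_lin \<phi> (fs_gen t) = \<phi> t"
proof -
  have "{s. fs_gen t s \<noteq> 0} = {t}" by (auto simp: fs_gen_def)
  then show ?thesis unfolding fs_lin_def by (simp add: fs_gen_def)
qed

lemma fs_lin_0 [simp]: "fs_lin \<phi> 0 = 0"
  unfolding fs_lin_def by (rule ext) (simp add: zero_fun_def)

lemma fs_lin_plus:
  assumes "finite_support f" "finite_support g"
  shows "fs_lin \<phi> (f + g) = fs_lin \<phi> f + fs_lin \<phi> g"
proof -
  let ?A = "{t. f t \<noteq> 0} \<union> {t. g t \<noteq> 0}"
  have A: "finite ?A" using assms unfolding finite_support_def by simp
  have "fs_lin \<phi> (f + g) = (\<lambda>s. \<Sum>t\<in>?A. (f + g) t * \<phi> t s)"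
    by (rule fs_lin_eq_sum_over[OF A]) (auto simp: plus_fun_def)
  moreover have "fs_lin \<phi> f = (\<lambda>s. \<Sum>t\<in>?A. f t * \<phi> t s)"
    by (rule fs_lin_eq_sum_over[OF A]) auto
  moreover have "fs_lin \<phi> g = (\<lambda>s. \<Sum>t\<in>?A. g t * \<phi> t s)"
    by (rule fs_lin_eq_sum_over[OF A]) auto
  ultimately show ?thesis by (simp add: plus_fun_def distrib_right sum.distrib)
qed

lemma fs_lin_uminus [simp]: "fs_lin \<phi> (- f) = - fs_lin \<phi> f"
  unfolding fs_lin_def by (simp add: fun_Compl_def sum_negf)

lemma fs_lin_minus:
  "finite_support f \<Longrightarrow> finite_support g \<Longrightarrow> fs_lin \<phi> (f - g) = fs_lin \<phi> f - fs_lin \<phi> g"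
  using fs_lin_plus[of f "- g" \<phi>] finite_support_uminus[of g] by simp

lemma fs_lin_sum:
  "(\<And>i. i \<in> A \<Longrightarrow> finite_support (f i)) \<Longrightarrow> fs_lin \<phi> (sum f A) = (\<Sum>i\<in>A. fs_lin \<phi> (f i))"
proof (induction A rule: infinite_finite_induct)
  case (insert x F)
  then have IH: "fs_lin \<phi> (sum f F) = (\<Sum>i\<in>F. fs_lin \<phi> (f i))" by simp
  have "fs_lin \<phi> (sum f (insert x F)) = fs_lin \<phi> (f x + sum f F)"
    using insert.hyps by (subst sum.insert) auto
  also have "\<dots> = fs_lin \<phi> (f x) + fs_lin \<phi> (sum f F)"
    using insert.prems by (intro fs_lin_plus finite_support_sum) auto
  also have "\<dots> = (\<Sum>i\<in>insert x F. fs_lin \<phi> (f i))"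
    using insert.hyps IH by (subst sum.insert) auto
  finally show ?case .
qed simp_all

lemma fs_lin_zspan:
  assumes "\<And>r. r \<in> S \<Longrightarrow> finite_support r" "\<And>r. r \<in> S \<Longrightarrow> fs_lin \<phi> r \<in> zspan S'"
    and "f \<in> zspan S"
  shows "fs_lin \<phi> f \<in> zspan S'"
  using assms(3)
proof (induction f rule: zspan.induct)
  case zspan_zero
  then show ?case by (simp only: fs_zero_eq_zero fs_lin_0 zspan_0)
next
  case (zspan_add f g)
  then have "finite_support f" "finite_support g"
    using finite_support_zspan assms(1) by blast+
  then show ?case using zspan_add.IH by (simp only: fs_add_eq_plus fs_lin_plus zspan_plus)
next
  case (zspan_neg f)
  then show ?case by (simp only: fs_neg_eq_uminus fs_lin_uminus zspan_uminus)
qed (rule assms(2))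

section \<open>Relations of the module of differentials\<close>

abbreviation gen :: "'a \<Rightarrow> 'a list \<Rightarrow> 'a fsum" where
  "gen a bs \<equiv> fs_gen (a, bs)"

abbreviation Null :: "nat \<Rightarrow> ('a::field) fsum set" where
  "Null q \<equiv> zspan (Rel q)"

lemma Null_additive_coeff:
  "length bs = q \<Longrightarrow> gen (a + a') bs - gen a bs - gen a' bs \<in> Null q"
  unfolding fs_diff_eq_minus[symmetric]
  by (rule zspan_base, unfold Rel_def Un_iff mem_Collect_eq, intro disjI1) blast

lemma Null_additive_slot:
  "length bs = q \<Longrightarrow> i < q \<Longrightarrow>
     gen a (bs[i := b + b']) - gen a (bs[i := b]) - gen a (bs[i := b']) \<in> Null q"
  unfolding fs_diff_eq_minus[symmetric] by (rule zspan_base) (unfold Rel_def, blast)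

lemma Null_Leibniz_slot:
  "length bs = q \<Longrightarrow> i < q \<Longrightarrow>
     gen a (bs[i := b * b']) - gen (a * b) (bs[i := b']) - gen (a * b') (bs[i := b]) \<in> Null q"
  unfolding fs_diff_eq_minus[symmetric] by (rule zspan_base) (unfold Rel_def, blast)

lemma Null_repeated_slot:
  "length bs = q \<Longrightarrow> i < j \<Longrightarrow> j < q \<Longrightarrow> bs ! i = bs ! j \<Longrightarrow> gen a bs \<in> Null q"
  by (rule zspan_base) (unfold Rel_def, blast)

lemma Null_swap_slots:
  "length bs = q \<Longrightarrow> i < j \<Longrightarrow> j < q \<Longrightarrow> gen a bs + gen a (bs[i := bs ! j, j := bs ! i]) \<in> Null q"
  unfolding fs_add_eq_plus[symmetric] by (rule zspan_base) (unfold Rel_def, blast)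

lemma finite_support_Null: "f \<in> Null q \<Longrightarrow> finite_support f"
  by (rule finite_support_zspan[of "Rel q"])
     (auto simp: Rel_def fs_diff_eq_minus fs_add_eq_plus
           intro!: finite_support_minus finite_support_plus finite_support_gen)

lemma gen_zero_Null: "length bs = q \<Longrightarrow> gen (0::'a::field) bs \<in> Null q"
  using zspan_uminus[OF Null_additive_coeff[of bs q 0 0]] by simp

lemma gen_uminus_Null: "length bs = q \<Longrightarrow> gen (- a::'a::field) bs + gen a bs \<in> Null q"
proof -
  assume "length bs = q"
  have "gen (- a) bs + gen a bs = gen 0 bs - (gen (a + - a) bs - gen a bs - gen (- a) bs)"
    by simp
  then show ?thesis
    using zspan_minus[OF gen_zero_Null Null_additive_coeff] \<open>length bs = q\<close> by metis
qed

lemma gen_of_nat_Null: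
  "length bs = q \<Longrightarrow> gen (of_nat n * a::'a::field) bs - zscale (int n) (gen a bs) \<in> Null q"
proof (induction n)
  case 0
  then show ?case using gen_zero_Null[of bs q] by (simp add: zscale_def zero_fun_def)
next
  case (Suc n)
  have "gen (of_nat (Suc n) * a) bs - zscale (int (Suc n)) (gen a bs) =
      (gen (of_nat n * a + a) bs - gen (of_nat n * a) bs - gen a bs)
      + (gen (of_nat n * a) bs - zscale (int n) (gen a bs))"
    by (simp add: zscale_def algebra_simps fun_eq_iff)
  then show ?case using zspan_plus[OF Null_additive_coeff Suc.IH] Suc.prems by metis
qed

lemma gen_power_slot_Null:
  "length bs = q \<Longrightarrow> i < q \<Longrightarrow>
     gen (a::'a::field) (bs[i := y ^ Suc n]) - zscale (int (Suc n)) (gen (a * y ^ n) (bs[i := y])) \<in> Null q"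
proof (induction n arbitrary: a)
  case 0
  then show ?case using zspan_0 by (simp add: zscale_def zero_fun_def)
next
  case (Suc n)
  have "gen a (bs[i := y ^ Suc (Suc n)]) - zscale (int (Suc (Suc n))) (gen (a * y ^ Suc n) (bs[i := y])) =
     (gen a (bs[i := y * y ^ Suc n]) - gen (a * y) (bs[i := y ^ Suc n]) - gen (a * y ^ Suc n) (bs[i := y]))
     + (gen (a * y) (bs[i := y ^ Suc n]) - zscale (int (Suc n)) (gen (a * y * y ^ n) (bs[i := y])))"
    by (simp add: zscale_def algebra_simps fun_eq_iff)
  then show ?case
    using zspan_plus[OF Null_Leibniz_slot Suc.IH] Suc.prems by metis
qed

text \<open>The relations force \<open>d(y^p) = p y^(p-1) dy = 0\<close>.\<close>

lemma gen_pth_power_slot_Null: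
  assumes "prime p" "CHAR('a::field) = p" "length bs = q" "i < q"
  shows "gen (a::'a) (bs[i := y ^ p]) \<in> Null q"
proof -
  let ?u = "zscale (int p) (gen (a * y ^ (p - 1)) (bs[i := y]))"
  have p: "Suc (p - 1) = p" using assms(1) prime_gt_0_nat by simp
  have l: "length (bs[i := y]) = q" using assms by simp
  have "of_nat p = (0::'a)" using assms(2) of_nat_CHAR by metis
  then have "gen 0 (bs[i := y]) - ?u \<in> Null q"
    using gen_of_nat_Null[OF l, of p "a * y ^ (p - 1)"] by simp
  moreover have "gen a (bs[i := y ^ p]) - ?u \<in> Null q"
    using gen_power_slot_Null[OF assms(3,4), of a y "p - 1"] p by simp
  ultimately have "(gen a (bs[i := y ^ p]) - ?u) - (gen 0 (bs[i := y]) - ?u) + gen 0 (bs[i := y]) \<in> Null q"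
    using zspan_plus zspan_minus gen_zero_Null[OF l] by blast
  then show ?thesis by simp
qed

lemma gen_nondistinct_Null:
  assumes "length cs = q" "\<not> distinct cs"
  shows "gen (a::'a::field) cs \<in> Null q"
proof -
  obtain i j where "i < j" "j < q" "cs ! i = cs ! j"
    using assms by (metis distinct_conv_nth linorder_neqE_nat)
  then show ?thesis using Null_repeated_slot assms(1) by blast
qed

definition gen_eq_up_to_sign :: "nat \<Rightarrow> ('a::field) list \<Rightarrow> 'a list \<Rightarrow> bool" where
  "gen_eq_up_to_sign q xs ys \<longleftrightarrow>
     (\<exists>s. (s = 1 \<or> s = -1) \<and> (\<forall>a. gen a xs - gen (s * a) ys \<in> Null q))"

lemma gen_eq_up_to_sign_refl: "gen_eq_up_to_sign q xs xs"
  unfolding gen_eq_up_to_sign_def by (rule exI[of _ 1]) (simp add: zspan_0)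

lemma gen_eq_up_to_sign_trans:
  assumes "gen_eq_up_to_sign q xs ys" "gen_eq_up_to_sign q ys zs"
  shows "gen_eq_up_to_sign q xs zs"
proof -
  obtain s where s: "s = 1 \<or> s = -1" "\<forall>a. gen a xs - gen (s * a) ys \<in> Null q"
    using assms(1) unfolding gen_eq_up_to_sign_def by blast
  obtain s' where s': "s' = 1 \<or> s' = -1" "\<forall>a. gen a ys - gen (s' * a) zs \<in> Null q"
    using assms(2) unfolding gen_eq_up_to_sign_def by blast
  have "gen a xs - gen (s' * s * a) zs =
      (gen a xs - gen (s * a) ys) + (gen (s * a) ys - gen (s' * (s * a)) zs)" for a
    by (simp add: mult.assoc)
  then have "\<forall>a. gen a xs - gen (s' * s * a) zs \<in> Null q"
    using s(2) s'(2) zspan_plus by metis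
  moreover have "s' * s = 1 \<or> s' * s = -1" using s(1) s'(1) by auto
  ultimately show ?thesis unfolding gen_eq_up_to_sign_def by blast
qed

lemma gen_eq_up_to_sign_swap:
  assumes "length xs = q" "i < j" "j < q"
  shows "gen_eq_up_to_sign q xs (xs[i := xs ! j, j := xs ! i])"
proof -
  let ?ys = "xs[i := xs ! j, j := xs ! i]"
  have l: "length ?ys = q" using assms(1) by simp
  have "gen a xs - gen (- 1 * a) ?ys = (gen a xs + gen a ?ys) - (gen (- a) ?ys + gen a ?ys)" for a
    by simp
  then have "\<forall>a. gen a xs - gen (- 1 * a) ?ys \<in> Null q"
    using zspan_minus[OF Null_swap_slots[OF assms] gen_uminus_Null[OF l]] by metis
  then show ?thesis unfolding gen_eq_up_to_sign_def by blast
qed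

lemma gen_eq_up_to_sign_perm:
  assumes "length xs = q" "length ys = q" "distinct xs" "distinct ys" "set xs = set ys"
  shows "gen_eq_up_to_sign q xs ys"
proof -
  have "gen_eq_up_to_sign q xs ys"
    if "length xs = q" "distinct xs" "set xs = set ys" "take k xs = take k ys" "q - k = n" for xs k n
    using that
  proof (induction n arbitrary: xs k)
    case 0
    then have "xs = ys" using assms(2) by (metis diff_is_0_eq take_all)
    then show ?case by (simp add: gen_eq_up_to_sign_refl)
  next
    case (Suc n)
    have k: "k < q" "q - Suc k = n" using Suc.prems(5) by auto
    have prefix: "xs ! i = ys ! i" if "i < k" for i
      using Suc.prems(4) that by (metis nth_take)
    obtain j where j: "j < q" "xs ! j = ys ! k"
      using Suc.prems(1,3) k(1) assms(2) by (metis in_set_conv_nth nth_mem)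
    have "k \<le> j"
    proof (rule ccontr)
      assume "\<not> k \<le> j"
      then have "ys ! j = ys ! k" using prefix j(2) by simp
      then show False using \<open>\<not> k \<le> j\<close> k(1) assms(2,4) by (simp add: nth_eq_iff_index_eq)
    qed
    define xs' where "xs' = xs[k := xs ! j, j := xs ! k]"
    have "gen_eq_up_to_sign q xs xs'"
    proof (cases "k = j")
      case True
      then show ?thesis unfolding xs'_def by (simp add: gen_eq_up_to_sign_refl)
    next
      case False
      then show ?thesis unfolding xs'_def
        using gen_eq_up_to_sign_swap[OF Suc.prems(1)] \<open>k \<le> j\<close> j(1) by simp
    qed
    moreover have "gen_eq_up_to_sign q xs' ys"
    proof (rule Suc.IH)
      show "length xs' = q" "distinct xs'" "set xs' = set ys"
        using Suc.prems(1-3) k(1) j(1) by (simp_all add: xs'_def distinct_swap set_swap)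
      show "take (Suc k) xs' = take (Suc k) ys"
        using Suc.prems(1) assms(2) k(1) j \<open>k \<le> j\<close> prefix
        by (intro nth_equalityI) (auto simp: xs'_def nth_list_update less_Suc_eq)
      show "q - Suc k = n" by (rule k(2))
    qed
    ultimately show ?case by (rule gen_eq_up_to_sign_trans)
  qed
  then show ?thesis using assms(1,3,5) by (metis diff_zero take0)
qed

section \<open>Forms over a generating family\<close>

text \<open>\<open>pclosure p T\<close> is the ring \<open>\<ell>^p[T]\<close>.\<close>

inductive_set pclosure :: "nat \<Rightarrow> ('a::field) set \<Rightarrow> 'a set" for p T where
  pclosure_base: "t \<in> T \<Longrightarrow> t \<in> pclosure p T"
| pclosure_power: "y ^ p \<in> pclosure p T"
| pclosure_add: "x \<in> pclosure p T \<Longrightarrow> y \<in> pclosure p T \<Longrightarrow> x + y \<in> pclosure p T"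
| pclosure_mult: "x \<in> pclosure p T \<Longrightarrow> y \<in> pclosure p T \<Longrightarrow> x * y \<in> pclosure p T"

lemma zspan_Un_left: "f \<in> zspan S \<Longrightarrow> f \<in> zspan (S \<union> X)"
  by (rule zspan_subset[of S]) (auto intro: zspan_base)

lemma gen_slot_pclosure:
  assumes "prime p" "CHAR('a::field) = p" "x \<in> pclosure p T" "length bs = q" "i < q"
  shows "gen (a::'a) (bs[i := x]) \<in> zspan (Rel q \<union> {gen a' (bs[i := t]) | a' t. t \<in> T})"
  using assms(3)
proof (induction x arbitrary: a rule: pclosure.induct)
  case (pclosure_base t)
  then show ?case by (intro zspan_base) blast
next
  case (pclosure_power y)
  then show ?case using gen_pth_power_slot_Null[OF assms(1,2,4,5)] by (rule zspan_Un_left)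
next
  case (pclosure_add x y)
  have "gen a (bs[i := x + y]) =
      (gen a (bs[i := x + y]) - gen a (bs[i := x]) - gen a (bs[i := y])) + gen a (bs[i := x]) + gen a (bs[i := y])"
    by simp
  then show ?case
    using zspan_plus[OF zspan_plus[OF zspan_Un_left[OF Null_additive_slot[OF assms(4,5), of a x y]]
        pclosure_add.IH(1)[of a]] pclosure_add.IH(2)[of a]] by simp
next
  case (pclosure_mult x y)
  have "gen a (bs[i := x * y]) =
      (gen a (bs[i := x * y]) - gen (a * x) (bs[i := y]) - gen (a * y) (bs[i := x]))
      + gen (a * x) (bs[i := y]) + gen (a * y) (bs[i := x])"
    by simp
  then show ?case
    using zspan_plus[OF zspan_plus[OF zspan_Un_left[OF Null_Leibniz_slot[OF assms(4,5), of a x y]]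
        pclosure_mult.IH(2)[of "a * x"]] pclosure_mult.IH(1)[of "a * y"]] by simp
qed

definition forms_over :: "nat \<Rightarrow> ('a::field) set \<Rightarrow> 'a fsum set" where
  "forms_over q T = zspan (Rel q \<union> {gen a cs | a cs. length cs = q \<and> set cs \<subseteq> T})"

lemma gen_in_forms_over:
  assumes "prime p" "CHAR('a::field) = p" "pclosure p T = UNIV" "length bs = q"
  shows "gen (a::'a) bs \<in> forms_over q T"
proof -
  have by_slots: "gen a bs \<in> forms_over q T"
    if "length bs = q" "\<forall>j. k \<le> j \<and> j < q \<longrightarrow> bs ! j \<in> T" for k a bs
    using that
  proof (induction k arbitrary: a bs)
    case 0
    then have "set bs \<subseteq> T" by (auto simp: in_set_conv_nth)
    then show ?case unfolding forms_over_def using 0 by (intro zspan_base) blast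
  next
    case (Suc k)
    show ?case
    proof (cases "k < q")
      case False
      then show ?thesis using Suc.prems by (intro Suc.IH) auto
    next
      case True
      have sub: "Rel q \<union> {gen a' (bs[k := t]) | a' t. t \<in> T} \<subseteq> forms_over q T"
      proof safe
        fix r :: "'a fsum" assume "r \<in> Rel q"
        then show "r \<in> forms_over q T" unfolding forms_over_def by (intro zspan_base) blast
      next
        fix a' t assume "t \<in> T"
        then show "gen a' (bs[k := t]) \<in> forms_over q T"
          using Suc.prems by (intro Suc.IH) (auto simp: nth_list_update)
      qed
      have "gen a (bs[k := bs ! k]) \<in> zspan (Rel q \<union> {gen a' (bs[k := t]) | a' t. t \<in> T})"
        using gen_slot_pclosure[OF assms(1,2)] assms(3) Suc.prems(1) True by blast
      then show ?thesis
        using zspan_subset[OF sub[unfolded forms_over_def]] unfolding forms_over_def by simp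
    qed
  qed
  show ?thesis by (rule by_slots[where k = q]) (use assms(4) in auto)
qed

lemma Form_subset_forms_over:
  assumes "prime p" "CHAR('a::field) = p" "pclosure p T = UNIV" "\<omega> \<in> Form q"
  shows "\<omega> \<in> forms_over q (T::'a set)"
  unfolding forms_over_def
proof (rule zspan_if_support_in_zspan[OF Form_finite_support[OF assms(4)]])
  fix t assume "\<omega> t \<noteq> 0"
  then have "length (snd t) = q" using assms(4) unfolding Form_def by blast
  then show "fs_gen t \<in> zspan (Rel q \<union> {gen a cs |a cs. length cs = q \<and> set cs \<subseteq> T})"
    using gen_in_forms_over[OF assms(1-3), of "snd t" q "fst t"] unfolding forms_over_def by simp
qed

abbreviation index_sets :: "nat \<Rightarrow> nat \<Rightarrow> nat set set" where
  "index_sets n q \<equiv> {I. I \<subseteq> {..<n} \<and> card I = q}"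

definition basis_sum :: "('a::field) list \<Rightarrow> nat \<Rightarrow> (nat set \<Rightarrow> 'a) \<Rightarrow> 'a fsum" where
  "basis_sum ts q f = (\<Sum>I\<in>index_sets (length ts) q. gen (f I) (nths ts I))"

lemma finite_index_sets: "finite (index_sets n q)"
  by (rule finite_subset[of _ "Pow {..<n}"]) auto

lemma length_nths_index_set: "I \<in> index_sets (length ts) q \<Longrightarrow> length (nths ts I) = q"
proof -
  assume I: "I \<in> index_sets (length ts) q"
  then have "{i. i < length ts \<and> i \<in> I} = I" by auto
  then show ?thesis using I by (simp add: length_nths)
qed

lemma basis_sum_Null:
  assumes "\<And>I. I \<in> index_sets (length ts) q \<Longrightarrow> f I = 0"
  shows "basis_sum ts q f \<in> Null q"
  unfolding basis_sum_def
  by (rule zspan_sum) (simp add: assms gen_zero_Null length_nths_index_set)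

lemma basis_sum_add:
  "basis_sum ts q (\<lambda>I. f I + g I) - basis_sum ts q f - basis_sum ts q g \<in> Null q"
  unfolding basis_sum_def sum_subtractf[symmetric]
  by (rule zspan_sum) (rule Null_additive_coeff, erule length_nths_index_set)

lemma basis_sum_uminus: "basis_sum ts q (\<lambda>I. - f I) + basis_sum ts q f \<in> Null q"
  unfolding basis_sum_def sum.distrib[symmetric]
  by (rule zspan_sum) (rule gen_uminus_Null, erule length_nths_index_set)

lemma basis_sum_single:
  assumes "I \<in> index_sets (length ts) q"
  shows "basis_sum ts q (\<lambda>J. if J = I then a else 0) - gen a (nths ts I) \<in> Null q"
proof -
  have "basis_sum ts q (\<lambda>J. if J = I then a else 0) =
      gen a (nths ts I) + (\<Sum>J\<in>index_sets (length ts) q - {I}. gen 0 (nths ts J))"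
    unfolding basis_sum_def using assms
    by (subst sum.remove[OF finite_index_sets assms]) (auto intro!: sum.cong)
  moreover have "(\<Sum>J\<in>index_sets (length ts) q - {I}. gen 0 (nths ts J)) \<in> Null q"
    by (rule zspan_sum) (auto intro: gen_zero_Null length_nths_index_set)
  ultimately show ?thesis by simp
qed

lemma basis_sum_top: "basis_sum ts (length ts) f = gen (f {..<length ts}) ts"
proof -
  have "index_sets (length ts) (length ts) = {{..<length ts}}"
  proof (intro equalityI subsetI)
    fix I assume "I \<in> index_sets (length ts) (length ts)"
    then show "I \<in> {{..<length ts}}" using card_subset_eq[of "{..<length ts}" I] by simp
  qed simp
  then show ?thesis unfolding basis_sum_def by simp
qed

lemma basis_sum_short:
  assumes "length ts < q"
  shows "basis_sum ts q f = 0"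
proof -
  have "I \<notin> index_sets (length ts) q" for I
  proof
    assume "I \<in> index_sets (length ts) q"
    then have "q \<le> length ts" using card_mono[OF finite_lessThan, of I "length ts"] by simp
    then show False using assms by simp
  qed
  then have empty: "index_sets (length ts) q = {}" by blast
  show ?thesis by (simp only: basis_sum_def empty sum.empty)
qed

lemma gen_eq_basis_sum:
  assumes "distinct ts" "length cs = q" "distinct cs" "set cs \<subseteq> set ts"
  shows "\<exists>f. gen a cs - basis_sum ts q f \<in> Null q"
proof -
  define I where "I = {i. i < length ts \<and> ts ! i \<in> set cs}"
  have I_sub: "I \<subseteq> {..<length ts}" by (auto simp: I_def)
  have set_eq: "set (nths ts I) = set cs"
  proof -
    have "set (nths ts I) = {x \<in> set ts. x \<in> set cs}"
      by (auto simp: I_def set_nths in_set_conv_nth)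
    then show ?thesis using assms(4) by auto
  qed
  have "card I = length (nths ts I)"
    using I_sub by (simp add: length_nths Int_absorb1 Collect_conj_eq lessThan_def)
  also have "\<dots> = card (set (nths ts I))" using assms(1) by (simp add: distinct_card)
  also have "\<dots> = q" using set_eq assms(2,3) by (simp add: distinct_card)
  finally have I: "I \<in> index_sets (length ts) q" using I_sub by simp
  obtain s where s: "\<forall>a. gen a cs - gen (s * a) (nths ts I) \<in> Null q"
    using gen_eq_up_to_sign_perm[OF assms(2) length_nths_index_set[OF I] assms(3) _ set_eq[symmetric]]
      assms(1)
    unfolding gen_eq_up_to_sign_def by auto
  let ?f = "\<lambda>J. if J = I then s * a else 0"
  have "gen a cs - basis_sum ts q ?f =
      (gen a cs - gen (s * a) (nths ts I)) - (basis_sum ts q ?f - gen (s * a) (nths ts I))"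
    by simp
  also have "\<dots> \<in> Null q" by (rule zspan_minus[OF s[rule_format] basis_sum_single[OF I]])
  finally show ?thesis by blast
qed

lemma forms_over_basis_sum:
  assumes "distinct ts" "\<omega> \<in> forms_over q (set ts)"
  shows "\<exists>f. \<omega> - basis_sum ts q f \<in> Null q"
  using assms(2) unfolding forms_over_def
proof (induction \<omega> rule: zspan.induct)
  case (zspan_base \<omega>)
  have zero: "\<exists>f. \<omega>' - basis_sum ts q f \<in> Null q" if "\<omega>' \<in> Null q" for \<omega>'
    using that by (intro exI[of _ "\<lambda>_. 0"] zspan_minus basis_sum_Null) simp_all
  from zspan_base consider "\<omega> \<in> Rel q"
    | a cs where "length cs = q" "set cs \<subseteq> set ts" "\<omega> = gen a cs" by blast
  then show ?case
  proof cases
    case 1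
    then show ?thesis by (intro zero zspan.zspan_base)
  next
    case 2
    show ?thesis
    proof (cases "distinct cs")
      case True
      then show ?thesis unfolding 2(3) by (rule gen_eq_basis_sum[OF assms(1) 2(1) _ 2(2)])
    next
      case False
      then show ?thesis unfolding 2(3) by (intro zero gen_nondistinct_Null[OF 2(1)])
    qed
  qed
next
  case zspan_zero
  have "fs_zero - basis_sum ts q (\<lambda>_. 0) \<in> Null q"
    unfolding fs_zero_eq_zero diff_0 by (intro zspan_uminus basis_sum_Null) simp
  then show ?case by blast
next
  case (zspan_add \<omega> \<omega>')
  then obtain f f' where f: "\<omega> - basis_sum ts q f \<in> Null q" "\<omega>' - basis_sum ts q f' \<in> Null q"
    by blast
  have "fs_add \<omega> \<omega>' - basis_sum ts q (\<lambda>I. f I + f' I) =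
      (\<omega> - basis_sum ts q f) + (\<omega>' - basis_sum ts q f')
      - (basis_sum ts q (\<lambda>I. f I + f' I) - basis_sum ts q f - basis_sum ts q f')"
    by (simp add: fs_add_eq_plus)
  also have "\<dots> \<in> Null q" by (rule zspan_minus[OF zspan_plus[OF f] basis_sum_add])
  finally show ?case by blast
next
  case (zspan_neg \<omega>)
  then obtain f where f: "\<omega> - basis_sum ts q f \<in> Null q" by blast
  have "fs_neg \<omega> - basis_sum ts q (\<lambda>I. - f I) =
      - (\<omega> - basis_sum ts q f) - (basis_sum ts q (\<lambda>I. - f I) + basis_sum ts q f)"
    by (simp add: fs_neg_eq_uminus)
  also have "\<dots> \<in> Null q" by (rule zspan_minus[OF zspan_uminus[OF f] basis_sum_uminus])
  finally show ?case by blast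
qed

lemma wedge_dlog_gen [simp]:
  "wedge_dlog a (gen x cs) J = gen (a * x / prod_list J) (cs @ J)"
  unfolding wedge_dlog_def by simp

lemma wedge_dlog_plus:
  "finite_support f \<Longrightarrow> finite_support g \<Longrightarrow> wedge_dlog a (f + g) J = wedge_dlog a f J + wedge_dlog a g J"
  unfolding wedge_dlog_def by (rule fs_lin_plus)

lemma wedge_dlog_minus:
  "finite_support f \<Longrightarrow> finite_support g \<Longrightarrow> wedge_dlog a (f - g) J = wedge_dlog a f J - wedge_dlog a g J"
  unfolding wedge_dlog_def by (rule fs_lin_minus)

lemma wedge_dlog_sum:
  "(\<And>i. i \<in> A \<Longrightarrow> finite_support (f i)) \<Longrightarrow> wedge_dlog a (sum f A) J = (\<Sum>i\<in>A. wedge_dlog a (f i) J)"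
  unfolding wedge_dlog_def by (rule fs_lin_sum)

lemma wedge_dlog_Rel:
  assumes "r \<in> Rel q"
  shows "wedge_dlog a r J \<in> Null (q + length J)"
proof -
  let ?P = "prod_list J"
  note fin = finite_support_gen finite_support_minus finite_support_plus
  note lin = wedge_dlog_minus wedge_dlog_plus wedge_dlog_gen
  have upd: "bs[i := y] @ J = (bs @ J)[i := y]" if "i < length bs" for bs i y
    using that by (simp add: list_update_append1)
  from assms[unfolded Rel_def fs_diff_eq_minus fs_add_eq_plus] show ?thesis
  proof (elim UnE, goal_cases)
    case 1
    then obtain a1 a2 bs where "length bs = q" "r = gen (a1 + a2) bs - gen a1 bs - gen a2 bs"
      by blast
    moreover have "a * (a1 + a2) / ?P = a * a1 / ?P + a * a2 / ?P"
      by (simp add: distrib_left add_divide_distrib)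
    ultimately show ?thesis by (simp only: fin lin Null_additive_coeff length_append)
  next
    case 2
    then obtain a1 b b' bs i where "length bs = q" "i < q"
      "r = gen a1 (bs[i := b + b']) - gen a1 (bs[i := b]) - gen a1 (bs[i := b'])" by blast
    then show ?thesis by (simp only: fin lin upd Null_additive_slot length_append trans_less_add1)
  next
    case 3
    then obtain a1 b b' bs i where "length bs = q" "i < q"
      "r = gen a1 (bs[i := b * b']) - gen (a1 * b) (bs[i := b']) - gen (a1 * b') (bs[i := b])" by blast
    moreover have "a * (a1 * y) / ?P = a * a1 / ?P * y" for y by simp
    ultimately show ?thesis by (simp only: fin lin upd Null_Leibniz_slot length_append trans_less_add1)
  next
    case 4
    then obtain a1 bs i j where c: "length bs = q" "i < j" "j < q" "bs ! i = bs ! j"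
      and r: "r = gen a1 bs" by blast
    have "(bs @ J) ! i = (bs @ J) ! j" using c by (simp add: nth_append)
    then show ?thesis unfolding r wedge_dlog_gen using c by (intro Null_repeated_slot[of _ _ i j]) simp_all
  next
    case 5
    then obtain a1 bs i j where "length bs = q" "i < j" "j < q"
      "r = gen a1 bs + gen a1 (bs[i := bs ! j, j := bs ! i])" by blast
    moreover have "bs[i := bs ! j, j := bs ! i] @ J = (bs @ J)[i := (bs @ J) ! j, j := (bs @ J) ! i]"
      using calculation by (simp add: list_update_append1 nth_append)
    ultimately show ?thesis by (simp only: fin lin Null_swap_slots length_append trans_less_add1)
  qed
qed

lemma wedge_dlog_Null: "f \<in> Null q \<Longrightarrow> wedge_dlog a f J \<in> Null (q + length J)"
  unfolding wedge_dlog_def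
  by (rule fs_lin_zspan[OF finite_support_Null[OF zspan_base] wedge_dlog_Rel[unfolded wedge_dlog_def]])

section \<open>Polynomials over a subfield containing the p-th powers\<close>

lemma coeff_linear_power_subleading:
  "coeff ([:a, 1:] ^ Suc n) n = of_nat (Suc n) * (a::'a::comm_ring_1)"
proof (induction n)
  case (Suc n)
  have "[:a, 1:] ^ Suc (Suc n) = smult a ([:a, 1:] ^ Suc n) + pCons 0 ([:a, 1:] ^ Suc n)"
    by (simp add: power_Suc2)
  then have "coeff ([:a, 1:] ^ Suc (Suc n)) (Suc n) = a * coeff ([:a, 1:] ^ Suc n) (Suc n) + coeff ([:a, 1:] ^ Suc n) n"
    by simp
  also have "\<dots> = a + of_nat (Suc n) * a" using Suc coeff_linear_power[of a "Suc n"] by simp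
  finally show ?case by (simp add: algebra_simps)
qed simp

lemma dvd_prime_elem_power:
  fixes P :: "'a::{idom,algebraic_semidom}"
  assumes "prime_elem P" "g dvd P ^ n"
  shows "\<exists>k u. k \<le> n \<and> is_unit u \<and> g = u * P ^ k"
  using assms(2)
proof (induction n arbitrary: g)
  case 0
  then show ?case by (intro exI[of _ 0] exI[of _ g]) simp
next
  case (Suc n)
  have P0: "P \<noteq> 0" using assms(1) by (simp add: prime_elem_def)
  show ?case
  proof (cases "P dvd g")
    case True
    then obtain g' where g': "g = P * g'" by (auto elim: dvdE)
    then have "g' dvd P ^ n" using Suc.prems P0 by simp
    from Suc.IH[OF this] obtain k u where "k \<le> n" "is_unit u" "g' = u * P ^ k" by blast
    then show ?thesis using g' by (intro exI[of _ "Suc k"] exI[of _ u]) (simp add: algebra_simps)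
  next
    case False
    obtain k where k: "P * P ^ n = g * k" using Suc.prems by (auto elim: dvdE)
    then have "P dvd k" using False assms(1) prime_elem_dvd_mult_iff by (metis dvd_triv_left)
    then obtain k' where "k = P * k'" by (auto elim: dvdE)
    then have "P ^ n = g * k'" using k P0 by (simp add: algebra_simps)
    then have "g dvd P ^ n" by simp
    from Suc.IH[OF this] obtain k u where "k \<le> n" "is_unit u" "g = u * P ^ k" by blast
    then show ?thesis by (intro exI[of _ k] exI[of _ u]) simp
  qed
qed

lemma linear_power_CHAR:
  fixes t :: "'a::field"
  assumes "prime p" "CHAR('a) = p"
  shows "[:-t, 1:] ^ p = monom 1 p - [:t ^ p:]"
proof -
  have "([:0, 1:] + [:-t:]) ^ p = [:0, 1:] ^ p + [:-t:] ^ p"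
    using assms by (intro freshmans_dream) simp_all
  moreover have "(-t) ^ p = - (t ^ p)" using minus_power_prime_CHAR[of p t] assms by simp
  ultimately show ?thesis by (simp add: monom_altdef poly_const_pow)
qed

lemma monic_dvd_linear_power:
  fixes g :: "'a::field poly"
  assumes "lead_coeff g = 1" "g dvd [:-t, 1:] ^ n"
  shows "g = [:-t, 1:] ^ degree g"
proof -
  have "prime_elem [:-t, 1::'a:]" using prime_elem_linear_field_poly[of 1 "-t"] by simp
  then obtain k u where ku: "is_unit u" "g = u * [:-t, 1:] ^ k"
    using dvd_prime_elem_power assms(2) by blast
  then obtain c where c: "u = [:c:]" by (auto simp: is_unit_poly_iff)
  have "lead_coeff g = c" using ku(2) c by (simp add: lead_coeff_mult lead_coeff_power)
  then have "c = 1" using assms(1) by simp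
  then show ?thesis using ku(2) c by (simp add: degree_linear_power)
qed

locale pth_power_subfield =
  fixes p :: nat and S :: "'a::field set"
  assumes prime_p: "prime p" and CHAR_p: "CHAR('a) = p"
    and zero_mem: "0 \<in> S" and one_mem: "1 \<in> S"
    and add_mem: "\<And>x y. x \<in> S \<Longrightarrow> y \<in> S \<Longrightarrow> x + y \<in> S"
    and uminus_mem: "\<And>x. x \<in> S \<Longrightarrow> - x \<in> S"
    and mult_mem: "\<And>x y. x \<in> S \<Longrightarrow> y \<in> S \<Longrightarrow> x * y \<in> S"
    and inverse_mem: "\<And>x. x \<in> S \<Longrightarrow> inverse x \<in> S"
    and power_mem: "\<And>x. x ^ p \<in> S"
begin

lemma diff_mem: "x \<in> S \<Longrightarrow> y \<in> S \<Longrightarrow> x - y \<in> S"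
  using add_mem[OF _ uminus_mem, of x y] by simp

lemma of_nat_mem: "of_nat k \<in> S"
  by (induction k) (auto intro: zero_mem one_mem add_mem)

definition poly_over :: "'a poly \<Rightarrow> bool" where
  "poly_over h \<longleftrightarrow> (\<forall>i. coeff h i \<in> S)"

lemma poly_over_const: "c \<in> S \<Longrightarrow> poly_over [:c:]"
  unfolding poly_over_def using zero_mem by (simp add: coeff_pCons split: nat.split)

lemma poly_over_diff: "poly_over g \<Longrightarrow> poly_over h \<Longrightarrow> poly_over (g - h)"
  unfolding poly_over_def by (simp add: diff_mem)

lemma poly_over_smult: "c \<in> S \<Longrightarrow> poly_over h \<Longrightarrow> poly_over (smult c h)"
  unfolding poly_over_def by (simp add: mult_mem)

lemma poly_over_monom: "c \<in> S \<Longrightarrow> poly_over (monom c n)"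
  unfolding poly_over_def by (simp add: coeff_monom zero_mem)

lemma poly_over_pCons: "c \<in> S \<Longrightarrow> poly_over h \<Longrightarrow> poly_over (pCons c h)"
  unfolding poly_over_def by (simp add: coeff_pCons split: nat.split)

lemma power_eq_poly_of_root:
  assumes "poly_over g" "g \<noteq> 0" "poly g t = 0"
  shows "\<exists>h. poly_over h \<and> degree h < degree g \<and> poly h t = t ^ degree g"
proof -
  define c where "c = lead_coeff g"
  have c: "c \<noteq> 0" "c \<in> S" using assms(1,2) unfolding c_def poly_over_def by simp_all
  have "degree g \<noteq> 0"
  proof
    assume "degree g = 0"
    then have "g = [:c:]" unfolding c_def by (metis degree_0_id)
    then show False using assms(3) c(1) by simp
  qed
  define h where "h = smult (- inverse c) (g - monom c (degree g))"
  have "poly_over h" unfolding h_def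
    using assms(1) c(2) by (intro poly_over_smult poly_over_diff poly_over_monom uminus_mem inverse_mem)
  moreover have "degree h < degree g"
  proof -
    have "degree h \<le> degree g - 1"
      by (rule degree_le) (auto simp: h_def c_def coeff_monom coeff_eq_0 le_antisym)
    then show ?thesis using \<open>degree g \<noteq> 0\<close> by simp
  qed
  moreover have "poly h t = t ^ degree g"
    using assms(3) c(1) by (simp add: h_def poly_monom field_simps)
  ultimately show ?thesis by blast
qed

lemma minimal_relation:
  obtains g where "poly_over g" "lead_coeff g = 1" "degree g \<le> p" "poly g t = 0"
    "\<And>h. poly_over h \<Longrightarrow> degree h < degree g \<Longrightarrow> poly h t = 0 \<Longrightarrow> h = 0"
proof -
  define P where "P m \<longleftrightarrow> (\<exists>h. poly_over h \<and> degree h < m \<and> poly h t = t ^ m)" for m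
  have "p > 0" using prime_p prime_gt_0_nat by blast
  then have "P p" unfolding P_def using poly_over_const[OF power_mem] by fastforce
  define m where "m = (LEAST m. P m)"
  have "P m" unfolding m_def by (rule LeastI[of P p]) fact
  then obtain h0 where h0: "poly_over h0" "degree h0 < m" "poly h0 t = t ^ m"
    unfolding P_def by blast
  have "m \<le> p" unfolding m_def by (rule Least_le) fact
  have minimal: "h = 0" if "poly_over h" "degree h < m" "poly h t = 0" for h
  proof (rule ccontr)
    assume "h \<noteq> 0"
    then have "P (degree h)" unfolding P_def using power_eq_poly_of_root that by blast
    then show False using that(2) not_less_Least unfolding m_def by blast
  qed
  define g where "g = monom 1 m - h0"
  have "poly_over g" unfolding g_def using h0(1) by (intro poly_over_diff poly_over_monom one_mem)
  moreover have "degree g = m"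
    using h0(2) degree_add_eq_left[of "- h0" "monom 1 m"] by (simp add: g_def degree_monom_eq)
  moreover have "lead_coeff g = 1"
    using h0(2) \<open>degree g = m\<close> by (simp add: g_def coeff_monom coeff_eq_0)
  moreover have "poly g t = 0" using h0(3) by (simp add: g_def poly_monom)
  ultimately show ?thesis using that minimal \<open>m \<le> p\<close> by metis
qed

lemma monom_mod_monic:
  assumes "poly_over g" "lead_coeff g = 1" "0 < degree g"
  shows "\<exists>r. poly_over r \<and> degree r < degree g \<and> g dvd monom 1 n - r"
proof (induction n)
  case 0
  then show ?case
    using assms(3) poly_over_const[OF one_mem] by (intro exI[of _ 1]) (simp add: one_pCons)
next
  case (Suc n)
  then obtain r where r: "poly_over r" "degree r < degree g" "g dvd monom 1 n - r" by blast
  define c where "c = coeff r (degree g - 1)"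
  define r' where "r' = pCons 0 r - smult c g"
  have "poly_over r'" unfolding r'_def c_def
    using r(1) assms(1) zero_mem by (intro poly_over_diff poly_over_pCons poly_over_smult) (auto simp: poly_over_def)
  moreover have "degree r' < degree g"
  proof -
    have "coeff r' i = 0" if "degree g - 1 < i" for i
    proof (cases i)
      case (Suc j)
      then show ?thesis
        using that r(2) assms(2,3) by (cases "i = degree g") (auto simp: r'_def c_def coeff_eq_0)
    qed (use that in simp)
    then have "degree r' \<le> degree g - 1" by (rule degree_le[rule_format])
    then show ?thesis using assms(3) by simp
  qed
  moreover have "g dvd monom 1 (Suc n) - r'"
  proof -
    have "monom 1 (Suc n) - r' = [:0, 1:] * (monom 1 n - r) + smult c g"
      unfolding r'_def by (simp add: monom_Suc algebra_simps)
    then show ?thesis by (simp only:) (intro dvd_add dvd_mult dvd_smult dvd_refl r(3))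
  qed
  ultimately show ?case by blast
qed

text \<open>The minimal relation of \<open>t\<close> divides \<open>X^p - t^p = (X - t)^p\<close>, so it is \<open>(X - t)^m\<close>; its
  coefficient \<open>-m t\<close> lies in \<open>S\<close>, which forces \<open>m = p\<close> as \<open>t \<notin> S\<close>.\<close>

lemma poly_over_root_eq_0:
  assumes "t \<notin> S" "poly_over h" "degree h < p" "poly h t = 0"
  shows "h = 0"
proof -
  obtain g where g: "poly_over g" "lead_coeff g = 1" "degree g \<le> p" "poly g t = 0"
    and minimal: "\<And>h. poly_over h \<Longrightarrow> degree h < degree g \<Longrightarrow> poly h t = 0 \<Longrightarrow> h = 0"
    using minimal_relation by blast
  define m where "m = degree g"
  have "m \<noteq> 0"
  proof
    assume "m = 0"
    then have "g = 1" using g(2) unfolding m_def by (metis degree_0_id one_pCons)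
    then show False using g(4) by simp
  qed
  obtain r where r: "poly_over r" "degree r < m" "g dvd monom 1 p - r"
    using monom_mod_monic g(1,2) \<open>m \<noteq> 0\<close> unfolding m_def by blast
  from r(3) obtain k where "monom 1 p - r = g * k" by (elim dvdE)
  then have "poly (monom 1 p - r) t = 0" using g(4) by (simp only: poly_mult mult_zero_left)
  then have "poly (r - [:t ^ p:]) t = 0" by (simp add: poly_monom)
  moreover have "degree (r - [:t ^ p:]) < m"
    using r(2) \<open>m \<noteq> 0\<close> by (intro degree_diff_less) simp_all
  ultimately have "r - [:t ^ p:] = 0"
    using r(1) unfolding m_def by (intro minimal poly_over_diff poly_over_const power_mem)
  then have "g dvd [:-t, 1:] ^ p" using r(3) linear_power_CHAR[OF prime_p CHAR_p] by simp
  then have g_eq: "g = [:-t, 1:] ^ m" unfolding m_def by (rule monic_dvd_linear_power[OF g(2)])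
  have "coeff g (m - 1) = of_nat m * (- t)"
    using coeff_linear_power_subleading[of "-t" "m - 1"] \<open>m \<noteq> 0\<close> g_eq by simp
  then have mt: "of_nat m * (- t) \<in> S" using g(1) unfolding poly_over_def by metis
  have "m = p"
  proof (rule ccontr)
    assume "m \<noteq> p"
    then have "\<not> p dvd m" using g(3) \<open>m \<noteq> 0\<close> unfolding m_def by (auto dest: dvd_imp_le)
    then have "of_nat m \<noteq> (0::'a)" using CHAR_p of_nat_eq_0_iff_char_dvd by metis
    then have "t = - (inverse (of_nat m) * (of_nat m * (- t)))" by (simp add: field_simps)
    also have "\<dots> \<in> S" by (rule uminus_mem[OF mult_mem[OF inverse_mem[OF of_nat_mem] mt]])
    finally show False using assms(1) by simp
  qed
  then show ?thesis using minimal assms(2-4) unfolding m_def by blast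
qed

end

section \<open>Generating families of the field over its p-th powers\<close>

text \<open>\<open>\<ell>\<close> as a vector space over itself via \<open>y \<cdot> x = y^p x\<close>, i.e. over the subfield \<open>\<ell>^p\<close>.\<close>

locale frob_twist =
  fixes p :: nat and sc :: "'a::field \<Rightarrow> 'a \<Rightarrow> 'a"
  assumes prime_p: "prime p" and CHAR_p: "CHAR('a) = p" and sc_eq: "\<And>y x. sc y x = y ^ p * x"
begin

lemma p_gt_0: "p > 0" using prime_p prime_gt_0_nat by blast

sublocale vector_space sc
proof
  fix a b x y :: 'a
  have frob_add: "(a + b) ^ p = a ^ p + b ^ p"
    using prime_p CHAR_p by (intro freshmans_dream) simp_all
  show "sc a (x + y) = sc a x + sc a y" unfolding sc_eq by (rule distrib_left)
  show "sc (a + b) x = sc a x + sc b x" unfolding sc_eq frob_add by (rule distrib_right)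
  show "sc a (sc b x) = sc (a * b) x" unfolding sc_eq by (simp only: power_mult_distrib mult.assoc)
  show "sc 1 x = x" unfolding sc_eq by simp
qed

primrec monomials :: "'a list \<Rightarrow> 'a set" where
  "monomials [] = {1}"
| "monomials (t # ts) = (\<lambda>(j, m). t ^ j * m) ` ({..<p} \<times> monomials ts)"

abbreviation pspan :: "'a list \<Rightarrow> 'a set" where
  "pspan ts \<equiv> span (monomials ts)"

lemma finite_monomials: "finite (monomials ts)"
  by (induction ts) auto

lemma power_mult_monomial_Cons: "j < p \<Longrightarrow> m \<in> monomials ts \<Longrightarrow> t ^ j * m \<in> monomials (t # ts)"
  by (force simp only: monomials.simps)

lemma one_in_monomials: "1 \<in> monomials ts"
proof (induction ts)
  case (Cons t ts)
  then show ?case using power_mult_monomial_Cons[of 0 1 ts t] p_gt_0 by simp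
qed simp

lemma set_subset_monomials: "set ts \<subseteq> monomials ts"
proof (induction ts)
  case (Cons t ts)
  have "t ^ 1 * 1 \<in> monomials (t # ts)"
    using prime_gt_1_nat[OF prime_p] one_in_monomials by (intro power_mult_monomial_Cons) auto
  moreover have "t ^ 0 * m \<in> monomials (t # ts)" if "m \<in> monomials ts" for m
    using that p_gt_0 by (intro power_mult_monomial_Cons)
  ultimately show ?case using Cons.IH by auto
qed simp

lemma power_in_pspan: "x ^ p \<in> pspan ts"
  using span_scale[OF span_base[OF one_in_monomials], of x] by (simp add: sc_eq)

lemma subspace_mult_preimage: "subspace {z. a * z \<in> span B}"
  unfolding subspace_def
proof (intro conjI ballI allI)
  fix x y assume "x \<in> {z. a * z \<in> span B}" "y \<in> {z. a * z \<in> span B}"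
  then show "x + y \<in> {z. a * z \<in> span B}" by (simp add: distrib_left span_add)
next
  fix c x assume "x \<in> {z. a * z \<in> span B}"
  then show "sc c x \<in> {z. a * z \<in> span B}"
    using span_scale[of "a * x" B c] by (simp add: sc_eq mult.left_commute)
qed (simp add: span_zero)

lemma power_mult_in_pspan_Cons:
  assumes "i < p" "z \<in> pspan ts"
  shows "t ^ i * z \<in> pspan (t # ts)"
  using assms(2)
proof (induction rule: span_induct[where P = "\<lambda>z. t ^ i * z \<in> pspan (t # ts)"])
  case base
  show ?case by (rule subspace_mult_preimage)
next
  case (step x)
  then show ?case using power_mult_monomial_Cons[OF assms(1)] by (intro span_base)
qed

lemma monomials_mult_in_pspan: "m \<in> monomials ts \<Longrightarrow> m' \<in> monomials ts \<Longrightarrow> m * m' \<in> pspan ts"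
proof (induction ts arbitrary: m m')
  case Nil
  then show ?case by (simp add: span_base)
next
  case (Cons t ts)
  obtain j a where ja: "j < p" "a \<in> monomials ts" "m = t ^ j * a" using Cons.prems(1) by auto
  obtain j' b where jb: "j' < p" "b \<in> monomials ts" "m' = t ^ j' * b" using Cons.prems(2) by auto
  have ab: "a * b \<in> pspan ts" using Cons.IH ja jb by blast
  have e: "m * m' = t ^ (j + j') * (a * b)" using ja jb by (simp add: power_add algebra_simps)
  show ?case
  proof (cases "j + j' < p")
    case True
    then show ?thesis unfolding e using power_mult_in_pspan_Cons ab by blast
  next
    case False
    define r where "r = j + j' - p"
    have "r < p" "j + j' = p + r" using ja jb False by (simp_all add: r_def)
    then have "t ^ (j + j') * (a * b) = sc t (t ^ r * (a * b))" by (simp add: sc_eq power_add mult.assoc)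
    then show ?thesis unfolding e using span_scale[OF power_mult_in_pspan_Cons[OF \<open>r < p\<close> ab]] by simp
  qed
qed

lemma pspan_mult:
  assumes "x \<in> pspan ts" "y \<in> pspan ts"
  shows "x * y \<in> pspan ts"
proof -
  have monomial_mult: "m * y \<in> pspan ts" if "m \<in> monomials ts" "y \<in> pspan ts" for m y
    using that(2)
  proof (induction rule: span_induct[where P = "\<lambda>y. m * y \<in> pspan ts"])
    case base
    show ?case by (rule subspace_mult_preimage)
  next
    case (step m')
    then show ?case using monomials_mult_in_pspan that(1) by blast
  qed
  have "y * x \<in> pspan ts"
    using assms(1)
  proof (induction rule: span_induct[where P = "\<lambda>x. y * x \<in> pspan ts"])
    case base
    show ?case by (rule subspace_mult_preimage)
  next
    case (step m)
    then show ?case using monomial_mult[OF _ assms(2), of m] by (simp add: mult.commute)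
  qed
  then show ?thesis by (simp add: mult.commute)
qed

lemma pspan_inverse:
  assumes "x \<in> pspan ts"
  shows "inverse x \<in> pspan ts"
proof (cases "x = 0")
  case True
  then show ?thesis by (simp add: span_zero)
next
  case False
  have powers: "x ^ n \<in> pspan ts" for n
    by (induction n) (auto intro: pspan_mult assms span_base one_in_monomials)
  have "x ^ p = x * x ^ (p - 1)" using p_gt_0 by (metis power_eq_if neq0_conv)
  then have "sc (inverse x) (x ^ (p - 1)) = inverse x"
    using False by (simp add: sc_eq power_inverse field_simps)
  then show ?thesis using span_scale[OF powers] by metis
qed

lemma pth_power_subfield_pspan: "pth_power_subfield p (pspan ts)"
proof
  show "prime p" "CHAR('a) = p" by (fact prime_p, fact CHAR_p)
  show "0 \<in> pspan ts" by (rule span_zero)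
  show "1 \<in> pspan ts" by (rule span_base[OF one_in_monomials])
  show "\<And>x y. x \<in> pspan ts \<Longrightarrow> y \<in> pspan ts \<Longrightarrow> x + y \<in> pspan ts" by (rule span_add)
  show "\<And>x. x \<in> pspan ts \<Longrightarrow> - x \<in> pspan ts" by (rule span_neg)
  show "\<And>x y. x \<in> pspan ts \<Longrightarrow> y \<in> pspan ts \<Longrightarrow> x * y \<in> pspan ts" by (rule pspan_mult)
  show "\<And>x. x \<in> pspan ts \<Longrightarrow> inverse x \<in> pspan ts" by (rule pspan_inverse)
  show "\<And>x. x ^ p \<in> pspan ts" by (rule power_in_pspan)
qed

lemma pspan_subset_pclosure: "pspan ts \<subseteq> pclosure p (set ts)"
proof
  have one: "1 \<in> pclosure p (set ts)" using pclosure_power[of 1] by simp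
  have monomials: "monomials ts' \<subseteq> pclosure p (set ts)" if "set ts' \<subseteq> set ts" for ts'
    using that
  proof (induction ts')
    case (Cons t ts')
    have "t ^ j \<in> pclosure p (set ts)" for j
      using Cons.prems one by (induction j) (auto intro: pclosure_mult pclosure_base)
    then show ?case using Cons by (auto intro: pclosure_mult)
  qed (simp add: one)
  have "0 \<in> pclosure p (set ts)"
    using pclosure_power[where y = 0 and p = p and T = "set ts"] p_gt_0 by (simp add: power_0_left)
  then have "subspace (pclosure p (set ts))"
    by (auto simp: subspace_def sc_eq intro: pclosure_add pclosure_mult pclosure_power)
  moreover fix x assume "x \<in> pspan ts"
  ultimately show "x \<in> pclosure p (set ts)"
    using monomials[of ts] by (auto intro: span_minimal[THEN subsetD])
qed

text \<open>A vanishing combination gives a polynomial of degree \<open>< p\<close> over \<open>pspan ts\<close> with root \<open>t\<close>.\<close>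

lemma monomials_Cons_combination_eq_0:
  assumes "independent (monomials ts)" "t \<notin> pspan ts"
    and "(\<Sum>x\<in>{..<p} \<times> monomials ts. sc (u x) ((\<lambda>(j, m). t ^ j * m) x)) = 0"
  shows "\<forall>x\<in>{..<p} \<times> monomials ts. u x = 0"
proof -
  interpret S: pth_power_subfield p "pspan ts" by (rule pth_power_subfield_pspan)
  define s where "s j = (\<Sum>m\<in>monomials ts. sc (u (j, m)) m)" for j
  have "(\<Sum>x\<in>{..<p} \<times> monomials ts. sc (u x) ((\<lambda>(j, m). t ^ j * m) x))
      = (\<Sum>j<p. \<Sum>m\<in>monomials ts. sc (u (j, m)) (t ^ j * m))"
    by (subst sum.cartesian_product) (intro sum.cong refl, auto)
  also have "\<dots> = (\<Sum>j<p. s j * t ^ j)"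
    unfolding s_def sum_distrib_right by (intro sum.cong refl) (simp add: sc_eq algebra_simps)
  finally have sum_eq_0: "(\<Sum>j<p. s j * t ^ j) = 0" using assms(3) by simp
  define h where "h = (\<Sum>j<p. monom (s j) j)"
  have coeff_h: "coeff h i = (if i < p then s i else 0)" for i
    unfolding h_def coeff_sum coeff_monom by (simp add: sum.delta)
  have "h = 0"
  proof (rule S.poly_over_root_eq_0[OF assms(2)])
    show "S.poly_over h"
      unfolding S.poly_over_def coeff_h s_def by (auto intro: span_sum span_scale span_base span_zero)
    have "degree h \<le> p - 1" by (rule degree_le) (auto simp: coeff_h)
    then show "degree h < p" using p_gt_0 by simp
    show "poly h t = 0" unfolding h_def poly_sum poly_monom using sum_eq_0 by simp
  qed
  show ?thesis
  proof
    fix x assume "x \<in> {..<p} \<times> monomials ts"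
    then obtain j m where x: "x = (j, m)" "j < p" "m \<in> monomials ts" by auto
    have "(\<Sum>m\<in>monomials ts. sc (u (j, m)) m) = 0"
      using coeff_h[of j] \<open>h = 0\<close> x(2) unfolding s_def by simp
    then have "\<forall>m\<in>monomials ts. u (j, m) = 0"
      using assms(1) dependent_finite[OF finite_monomials, of ts] by auto
    then show "u x = 0" using x by simp
  qed
qed

lemma independent_monomials_Cons:
  assumes "independent (monomials ts)" "card (monomials ts) = p ^ length ts" "t \<notin> pspan ts"
  shows "independent (monomials (t # ts)) \<and> card (monomials (t # ts)) = p ^ length (t # ts)"
proof -
  define A where "A = {..<p} \<times> monomials ts"
  define f where "f = (\<lambda>(j::nat, m::'a). t ^ j * m)"
  have image: "monomials (t # ts) = f ` A" unfolding A_def f_def by simp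
  have "finite A" unfolding A_def using finite_monomials by simp
  have combination_eq_0: "\<forall>x\<in>A. u x = 0" if "(\<Sum>x\<in>A. sc (u x) (f x)) = 0" for u
    using monomials_Cons_combination_eq_0[OF assms(1,3)] that unfolding A_def f_def by blast
  have inj: "inj_on f A"
  proof (rule inj_onI, rule ccontr)
    fix x y assume xy: "x \<in> A" "y \<in> A" "f x = f y" "x \<noteq> y"
    define u where "u z = (if z = x then 1 else if z = y then -1 else (0::'a))" for z
    have minus_one: "(-1::'a) ^ p = -1" using minus_power_prime_CHAR[of p "1::'a"] CHAR_p prime_p by simp
    have "(\<Sum>z\<in>A. sc (u z) (f z)) = (\<Sum>z\<in>{x, y}. sc (u z) (f z))"
      by (rule sum.mono_neutral_right) (use \<open>finite A\<close> xy in \<open>auto simp: u_def sc_eq p_gt_0\<close>)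
    also have "\<dots> = sc (u x) (f x) + sc (u y) (f y)" using xy(4) by simp
    also have "\<dots> = 0" using xy(3,4) minus_one by (simp add: u_def sc_eq)
    finally have "\<forall>z\<in>A. u z = 0" using combination_eq_0 by blast
    then show False using xy(1) unfolding u_def by (metis one_neq_zero)
  qed
  have "\<not> dependent (f ` A)"
  proof
    assume "dependent (f ` A)"
    then obtain v where v: "\<exists>w\<in>f ` A. v w \<noteq> 0" "(\<Sum>w\<in>f ` A. sc (v w) w) = 0"
      using dependent_finite[of "f ` A"] \<open>finite A\<close> by auto
    then have "(\<Sum>x\<in>A. sc (v (f x)) (f x)) = 0" using sum.reindex[OF inj, of "\<lambda>w. sc (v w) w"] by simp
    then show False using v(1) combination_eq_0[of "\<lambda>x. v (f x)"] by auto
  qed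
  moreover have "card (f ` A) = p * card (monomials ts)"
    using card_image[OF inj] unfolding A_def by (simp add: card_cartesian_product)
  ultimately show ?thesis using image assms(2) by simp
qed

lemma independent_monomials_or_spanning:
  "(\<exists>ts. length ts = n \<and> distinct ts \<and> 0 \<notin> set ts \<and> independent (monomials ts) \<and> card (monomials ts) = p ^ n)
   \<or> (\<exists>ts. length ts < n \<and> distinct ts \<and> 0 \<notin> set ts \<and> pspan ts = UNIV)"
proof (induction n)
  case 0
  have "independent {1::'a}" by (rule independent_insertI) (simp_all add: independent_empty)
  then show ?case by (intro disjI1 exI[of _ "[]"]) simp
next
  case (Suc n)
  then show ?case
  proof
    assume "\<exists>ts. length ts = n \<and> distinct ts \<and> 0 \<notin> set ts \<and> independent (monomials ts) \<and> card (monomials ts) = p ^ n"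
    then obtain ts where ts: "length ts = n" "distinct ts" "0 \<notin> set ts"
      "independent (monomials ts)" "card (monomials ts) = p ^ n" by blast
    show ?thesis
    proof (cases "pspan ts = UNIV")
      case True
      then show ?thesis using ts by (intro disjI2 exI[of _ ts]) simp
    next
      case False
      then obtain t where t: "t \<notin> pspan ts" by blast
      then have "t \<notin> set ts" "t \<noteq> 0" using set_subset_monomials[of ts] span_base span_zero by blast+
      then show ?thesis
        using independent_monomials_Cons[OF ts(4) _ t] ts by (intro disjI1 exI[of _ "t # ts"]) simp
    qed
  next
    assume "\<exists>ts. length ts < n \<and> distinct ts \<and> 0 \<notin> set ts \<and> pspan ts = UNIV"
    then show ?thesis using less_SucI by blast
  qed
qed

text \<open>At most \<open>c\<close> elements generate \<open>\<ell>\<close> over \<open>\<ell>^p\<close>: \<open>c + 1\<close> independent ones would give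
  \<open>p^(c+1)\<close> linearly independent monomials in a space spanned by \<open>p^c\<close> vectors.\<close>

lemma frob_degree_generators:
  assumes "frob_degree p c TYPE('a)"
  shows "\<exists>ts::'a list. length ts \<le> c \<and> distinct ts \<and> 0 \<notin> set ts \<and> pclosure p (set ts) = UNIV"
proof -
  obtain e :: "'a list" where e: "length e = p ^ c"
    "\<forall>x. \<exists>!y. length y = p ^ c \<and> x = (\<Sum>i<p ^ c. (y ! i) ^ p * e ! i)"
    using assms unfolding frob_degree_def by blast
  have span_e: "x \<in> span (set e)" for x
  proof -
    obtain y where y: "x = (\<Sum>i<p ^ c. (y ! i) ^ p * e ! i)" using e(2) by blast
    have "(\<Sum>i<p ^ c. sc (y ! i) (e ! i)) \<in> span (set e)"
      using e(1) by (intro span_sum span_scale span_base) simp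
    then show ?thesis using y by (simp add: sc_eq)
  qed
  from independent_monomials_or_spanning[of "Suc c"] show ?thesis
  proof
    assume "\<exists>ts. length ts = Suc c \<and> distinct ts \<and> 0 \<notin> set ts \<and> independent (monomials ts)
      \<and> card (monomials ts) = p ^ Suc c"
    then obtain ts where ts: "independent (monomials ts)" "card (monomials ts) = p ^ Suc c" by blast
    have "p ^ Suc c \<le> card (set e)"
      using independent_span_bound[OF _ ts(1), of "set e"] span_e ts(2) by auto
    also have "\<dots> \<le> p ^ c" using card_length[of e] e(1) by simp
    finally show ?thesis using prime_gt_1_nat[OF prime_p] by simp
  next
    assume "\<exists>ts. length ts < Suc c \<and> distinct ts \<and> 0 \<notin> set ts \<and> pspan ts = UNIV"
    then obtain ts where "length ts \<le> c" "distinct ts" "0 \<notin> set ts" "pspan ts = UNIV"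
      by (metis less_Suc_eq_le)
    moreover from this have "pclosure p (set ts) = UNIV" using pspan_subset_pclosure by blast
    ultimately show ?thesis by blast
  qed
qed

end

lemma exists_pclosure_generators:
  assumes "prime p" "CHAR('a::field) = p" "frob_degree p c TYPE('a)"
  shows "\<exists>ts::'a list. length ts \<le> c \<and> distinct ts \<and> 0 \<notin> set ts \<and> pclosure p (set ts) = UNIV"
proof -
  interpret frob_twist p "\<lambda>y x. y ^ p * (x::'a)" by unfold_locales (use assms in simp_all)
  show ?thesis by (rule frob_degree_generators[OF assms(3)])
qed

section \<open>The cohomological condition\<close>

lemma H_zero_cong:
  assumes "\<omega> - \<omega>' \<in> Null c" "H_zero p c \<omega>'"
  shows "H_zero p c (\<omega>::'a::field fsum)"
proof -
  obtain \<eta> \<beta> where \<eta>\<beta>: "\<eta> \<in> Form c" "\<beta> \<in> Form (c - 1)" "c = 0 \<longrightarrow> \<beta> = fs_zero"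
    "form_eq c \<omega>' (fs_add (fs_diff (cartier_inv p \<eta>) \<eta>) (dform \<beta>))"
    using assms(2) unfolding H_zero_def by blast
  let ?X = "fs_add (fs_diff (cartier_inv p \<eta>) \<eta>) (dform \<beta>)"
  have "\<omega>' - ?X \<in> Null c" using \<eta>\<beta>(4) unfolding form_eq_def fs_diff_eq_minus[of \<omega>'] .
  moreover have "\<omega> - ?X = (\<omega> - \<omega>') + (\<omega>' - ?X)" by simp
  ultimately have "form_eq c \<omega> ?X"
    unfolding form_eq_def fs_diff_eq_minus[of \<omega>] using zspan_plus[OF assms(1)] by metis
  then show ?thesis unfolding H_zero_def using \<eta>\<beta>(1-3) by blast
qed

lemma H_zero_Null:
  assumes "\<omega> \<in> Null c"
  shows "H_zero p c (\<omega>::'a::field fsum)"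
proof -
  have X: "fs_add (fs_diff (cartier_inv p fs_zero) fs_zero) (dform fs_zero) = (0::'a fsum)"
    unfolding fs_add_eq_plus fs_diff_eq_minus fs_zero_eq_zero cartier_inv_def dform_def by simp
  have "fs_zero \<in> Form q" for q :: nat unfolding Form_def fs_zero_def by simp
  moreover have "form_eq c \<omega> (fs_add (fs_diff (cartier_inv p fs_zero) fs_zero) (dform fs_zero))"
    unfolding form_eq_def X unfolding fs_diff_eq_minus diff_zero by (rule assms)
  ultimately show ?thesis unfolding H_zero_def by blast
qed

lemma H_nonzero_top_gen:
  assumes "prime p" "CHAR('a::field) = p" "H_nonzero p c TYPE('a)"
    and "distinct ts" "pclosure p (set ts) = UNIV" "length (ts::'a list) \<le> c"
  shows "length ts = c" "\<exists>g. \<not> H_zero p c (gen g ts)"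
proof -
  obtain \<omega> :: "'a fsum" where \<omega>: "\<omega> \<in> Form c" "\<not> H_zero p c \<omega>"
    using assms(3) unfolding H_nonzero_def by blast
  obtain f where f: "\<omega> - basis_sum ts c f \<in> Null c"
    using forms_over_basis_sum[OF assms(4) Form_subset_forms_over[OF assms(1,2,5) \<omega>(1)]] by blast
  show len: "length ts = c"
  proof (rule ccontr)
    assume "length ts \<noteq> c"
    then have "basis_sum ts c f = 0" using assms(6) by (intro basis_sum_short) simp
    then have "\<omega> \<in> Null c" using f by simp
    then show False using H_zero_Null \<omega>(2) by blast
  qed
  have "\<omega> - gen (f {..<c}) ts \<in> Null c" using f basis_sum_top[of ts f] len by simp
  then show "\<exists>g. \<not> H_zero p c (gen g ts)" using \<omega>(2) H_zero_cong by blast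
qed

lemma index_sets_card_le: "I \<in> index_sets n q \<Longrightarrow> q \<le> n"
  using card_mono[OF finite_lessThan, of I n] by simp

lemma set_nths_Compl_disjoint:
  "distinct ts \<Longrightarrow> set (nths ts I) \<inter> set (nths ts (- I)) = {}"
  by (auto simp: set_nths nth_eq_iff_index_eq)

lemma length_nths_Compl:
  "I \<in> index_sets (length ts) q \<Longrightarrow> length (nths ts (- I)) = length ts - q"
proof -
  assume I: "I \<in> index_sets (length ts) q"
  then have "{i. i < length ts \<and> i \<in> - I} = {..<length ts} - I" by auto
  then show ?thesis
    using I card_Diff_subset[of I "{..<length ts}"] finite_subset[of I "{..<length ts}"]
    by (simp add: length_nths)
qed

lemma gen_eq_up_to_sign_nths_Compl:
  assumes "distinct ts" "I \<in> index_sets (length ts) q"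
  shows "gen_eq_up_to_sign (length ts) (nths ts I @ nths ts (- I)) ts"
proof (rule gen_eq_up_to_sign_perm)
  show "length (nths ts I @ nths ts (- I)) = length ts"
    using length_nths_index_set[OF assms(2)] length_nths_Compl[OF assms(2)]
      index_sets_card_le[OF assms(2)] by simp
  show "distinct (nths ts I @ nths ts (- I))"
    using assms(1) set_nths_Compl_disjoint by simp
  have "set (nths ts I) \<union> set (nths ts (- I)) = set ts"
    by (auto simp: set_nths set_conv_nth[of ts])
  then show "set (nths ts I @ nths ts (- I)) = set ts" by simp
qed (use assms(1) in simp_all)

text \<open>Wedging with \<open>dlog\<close> of the complementary generators kills every basis form but one.\<close>

lemma wedge_dlog_basis_sum:
  assumes "distinct ts" "I \<in> index_sets (length ts) q"
  defines "J \<equiv> nths ts (- I)"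
  shows "wedge_dlog a (basis_sum ts q f) J - gen (a * f I / prod_list J) (nths ts I @ J) \<in> Null (length ts)"
proof -
  have len: "length (nths ts I' @ J) = length ts" if "I' \<in> index_sets (length ts) q" for I'
    using length_nths_index_set[OF that] length_nths_Compl[OF assms(2)]
      index_sets_card_le[OF assms(2)] by (simp add: J_def)
  have other: "gen x (nths ts I' @ J) \<in> Null (length ts)"
    if I': "I' \<in> index_sets (length ts) q - {I}" for I' x
  proof (rule gen_nondistinct_Null[OF len])
    have "\<not> I' \<subseteq> I" using I' assms(2) card_subset_eq[of I I'] finite_subset by auto
    then obtain i where "i \<in> I'" "i \<notin> I" by blast
    then have "ts ! i \<in> set (nths ts I') \<inter> set J" using I' by (auto simp: J_def set_nths)
    then show "\<not> distinct (nths ts I' @ J)" by auto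
  qed (use I' in simp)
  have "wedge_dlog a (basis_sum ts q f) J = (\<Sum>I'\<in>index_sets (length ts) q. gen (a * f I' / prod_list J) (nths ts I' @ J))"
    unfolding basis_sum_def by (simp add: wedge_dlog_sum finite_support_gen)
  also have "\<dots> = gen (a * f I / prod_list J) (nths ts I @ J)
      + (\<Sum>I'\<in>index_sets (length ts) q - {I}. gen (a * f I' / prod_list J) (nths ts I' @ J))"
    by (rule sum.remove[OF finite_index_sets assms(2)])
  moreover have "(\<Sum>I'\<in>index_sets (length ts) q - {I}. gen (a * f I' / prod_list J) (nths ts I' @ J))
      \<in> Null (length ts)"
    by (rule zspan_sum) (rule other)
  ultimately show ?thesis by simp
qed

lemma top_gen_H_zero:
  assumes "distinct ts" "0 \<notin> set ts" "q \<le> length ts" "\<alpha> \<in> Form q"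
    and "\<alpha> - basis_sum ts q f \<in> Null q" "I \<in> index_sets (length ts) q" "f I \<noteq> 0"
    and "\<And>a. H_zero p (length ts) (wedge_dlog a \<alpha> (nths ts (- I)))"
  shows "H_zero p (length ts) (gen g ts)"
proof -
  define J where "J = nths ts (- I)"
  have "prod_list J \<noteq> 0" using assms(2) set_nths_subset[of ts "- I"] by (auto simp: J_def prod_list_zero_iff)
  obtain s where s: "s = 1 \<or> s = -1" "\<forall>x. gen x (nths ts I @ J) - gen (s * x) ts \<in> Null (length ts)"
    using gen_eq_up_to_sign_nths_Compl[OF assms(1,6)] unfolding gen_eq_up_to_sign_def J_def by blast
  define a where "a = s * g * prod_list J / f I"
  have a: "s * (a * f I / prod_list J) = g" using s(1) \<open>prod_list J \<noteq> 0\<close> assms(7) by (auto simp: a_def)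
  have "q + length J = length ts" using length_nths_Compl[OF assms(6)] assms(3) by (simp add: J_def)
  then have "wedge_dlog a (\<alpha> - basis_sum ts q f) J \<in> Null (length ts)"
    using wedge_dlog_Null[OF assms(5)] by metis
  then have D: "wedge_dlog a \<alpha> J - wedge_dlog a (basis_sum ts q f) J \<in> Null (length ts)"
    using finite_support_Null[OF assms(5)] Form_finite_support[OF assms(4)]
    by (simp add: wedge_dlog_minus basis_sum_def finite_support_sum finite_support_gen)
  have E: "wedge_dlog a (basis_sum ts q f) J - gen (a * f I / prod_list J) (nths ts I @ J)
      \<in> Null (length ts)"
    using wedge_dlog_basis_sum[OF assms(1,6)] unfolding J_def .
  have F: "gen (a * f I / prod_list J) (nths ts I @ J) - gen g ts \<in> Null (length ts)"
    using s(2)[rule_format, of "a * f I / prod_list J"] unfolding a .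
  have "- (gen g ts - wedge_dlog a \<alpha> J) =
      (wedge_dlog a \<alpha> J - wedge_dlog a (basis_sum ts q f) J)
      + (wedge_dlog a (basis_sum ts q f) J - gen (a * f I / prod_list J) (nths ts I @ J))
      + (gen (a * f I / prod_list J) (nths ts I @ J) - gen g ts)"
    by simp
  then have "- (gen g ts - wedge_dlog a \<alpha> J) \<in> Null (length ts)"
    using zspan_plus[OF zspan_plus[OF D E] F] by simp
  then have "gen g ts - wedge_dlog a \<alpha> J \<in> Null (length ts)"
    using zspan_uminus by fastforce
  then show ?thesis using H_zero_cong assms(8) unfolding J_def by blast
qed

theorem lemma4p3:
  fixes p c q :: nat and \<alpha> :: "('a::field) fsum"
  assumes "prime p" and "CHAR('a) = p"
    and "frob_degree p c TYPE('a)"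
    and "H_nonzero p c TYPE('a)"
    and "q \<le> c"
    and "\<alpha> \<in> Form q"
    and "\<forall>(a::'a) bs. length bs = c - q \<and> (\<forall>b\<in>set bs. b \<noteq> 0)
            \<longrightarrow> H_zero p c (wedge_dlog a \<alpha> bs)"
  shows "form_eq q \<alpha> fs_zero"
proof -
  obtain ts :: "'a list" where ts: "length ts \<le> c" "distinct ts" "0 \<notin> set ts" "pclosure p (set ts) = UNIV"
    using exists_pclosure_generators[OF assms(1-3)] by blast
  note top = H_nonzero_top_gen[OF assms(1,2,4) ts(2,4,1)]
  obtain f where f: "\<alpha> - basis_sum ts q f \<in> Null q"
    using forms_over_basis_sum[OF ts(2) Form_subset_forms_over[OF assms(1,2) ts(4) assms(6)]] by blast
  have "f I = 0" if I: "I \<in> index_sets c q" for I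
  proof (rule ccontr)
    assume "f I \<noteq> 0"
    have "length (nths ts (- I)) = c - q" "0 \<notin> set (nths ts (- I))"
      using length_nths_Compl[of I ts q] I top(1) ts(3) set_nths_subset[of ts "- I"] by auto
    then have "H_zero p c (wedge_dlog a \<alpha> (nths ts (- I)))" for a using assms(7) by blast
    then have "H_zero p c (gen g ts)" for g
      using top_gen_H_zero[OF ts(2,3) _ assms(6) f _ \<open>f I \<noteq> 0\<close>] I top(1) assms(5) by blast
    then show False using top(2) by blast
  qed
  then have "basis_sum ts q f \<in> Null q" using top(1) by (intro basis_sum_Null) auto
  then have "(\<alpha> - basis_sum ts q f) + basis_sum ts q f \<in> Null q" using zspan_plus[OF f] by blast
  then show ?thesis unfolding form_eq_def fs_diff_eq_minus fs_zero_eq_zero by simp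
qed

end
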